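(* Let $\mathcal F=\{f_w:w\in\mathcal W\}$ be measurable functions $\mathsf Z\to\mathbb R$ indexed by a countable set $\mathcal W$, let $Q$ be a distribution on $\mathcal W$, $\gamma>0$, and let $\mu$ be a distribution on $\mathsf Z$ such that $f_w(Z)$, $Z\sim\mu$, is $\sigma^2$-subgaussian for all $w\in\mathcal W$. Let $\widehat w(\mu)$ be an index minimizing $\mu(f_w)$ over $\mathcal W$. If $S=(Z_1,\dots,Z_n)\sim\mu^{\otimes n}$ and, given $S=s$, $W$ has the Gibbs distribution $P^{\gamma,Q}_{W|S=s}(\mathrm dw)\propto e^{-\gamma\mu_s(f_w)}Q(\mathrm dw)$, then $$\mathbb E[\mu(f_W)]\le\inf_{w\in\mathcal W}\mu(f_w)+\frac1\gamma D(\delta_{\widehat w(\mu)}\|Q)+\frac{\gamma\sigma^2}{2n}.$$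
   Context: For $s=(z_1,\dots,z_n)$, $\mu_s(f_w)=\frac1n\sum_{i=1}^nf_w(z_i)$ is the empirical mean and $\mu(f_w)=\mathbb E_{Z\sim\mu}f_w(Z)$ the true mean. $\sigma^2$-subgaussian: $\mathbb E[e^{\lambda(X-\mathbb EX)}]\le e^{\lambda^2\sigma^2/2}$ for all real $\lambda$. $D$ is relative entropy and $D(\delta_{\widehat w}\|Q)=\log(1/Q(\widehat w))$. *)

theory Defs
  imports "HOL-Probability.Probability"
begin

definition subgaussian :: "'a measure \<Rightarrow> ('a \<Rightarrow> real) \<Rightarrow> real \<Rightarrow> bool" where
  "subgaussian M X \<sigma>2 \<longleftrightarrow> prob_space M \<and> X \<in> borel_measurable M \<and> integrable M X \<and>
     (\<forall>l::real. integrable M (\<lambda>z. exp (l * (X z - integral\<^sup>L M X))) \<and>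
        (\<integral>z. exp (l * (X z - integral\<^sup>L M X)) \<partial>M) \<le> exp (l\<^sup>2 * \<sigma>2 / 2))"

definition emp_mean :: "nat \<Rightarrow> ('w \<Rightarrow> 'z \<Rightarrow> real) \<Rightarrow> (nat \<Rightarrow> 'z) \<Rightarrow> 'w \<Rightarrow> real" where
  "emp_mean n f s w = (\<Sum>i<n. f w (s i)) / real n"

definition gibbs_weight :: "real \<Rightarrow> 'w pmf \<Rightarrow> nat \<Rightarrow> ('w \<Rightarrow> 'z \<Rightarrow> real) \<Rightarrow> (nat \<Rightarrow> 'z) \<Rightarrow> 'w \<Rightarrow> real" where
  "gibbs_weight \<gamma> Q n f s w = exp (- \<gamma> * emp_mean n f s w) * pmf Q w"

definition gibbs :: "real \<Rightarrow> 'w pmf \<Rightarrow> nat \<Rightarrow> ('w \<Rightarrow> 'z \<Rightarrow> real) \<Rightarrow> (nat \<Rightarrow> 'z) \<Rightarrow> 'w \<Rightarrow> real" where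
  "gibbs \<gamma> Q n f s w = gibbs_weight \<gamma> Q n f s w / (\<Sum>\<^sub>\<infinity>v. gibbs_weight \<gamma> Q n f s v)"

end

theory Submission
  imports Defs
begin

(* Fix a sample s and write P_s for the Gibbs posterior, Z_s for its normaliser and
   T_s = sum_w Q(w) exp(gamma (mu(f_w) - mu_s(f_w))).  Jensen's inequality for exp under P_s gives
   gamma E_{P_s}[mu(f_W)] <= ln T_s - ln Z_s, and Z_s >= Q(w_hat) exp(-gamma mu_s(f_w_hat)).
   Averaging over S, mu_S(f_w_hat) has mean mu(f_w_hat), while by Tonelli and the subgaussian bound
   on the moment generating function of a sample mean, E[T_S] <= exp(gamma^2 sigma^2 / (2 n)).
   The logarithm is taken out of the expectation with the tangent-line bound
   ln x <= x / c - 1 + ln c. *)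

lemma summable_on_mult_of_exp_summable:
  fixes p x :: "'a \<Rightarrow> real"
  assumes p_nonneg: "\<And>a. p a \<ge> 0" and "p summable_on A"
    and "(\<lambda>a. p a * exp (x a)) summable_on A" and lower: "\<And>a. b \<le> x a"
  shows "(\<lambda>a. p a * x a) summable_on A"
proof -
  have bound: "norm (p a * x a) \<le> p a * exp (x a) + p a * \<bar>b\<bar>" for a
  proof -
    have "\<bar>x a\<bar> \<le> exp (x a) + \<bar>b\<bar>"
      using exp_ge_add_one_self[of "x a"] exp_gt_zero[of "x a"] lower[of a] abs_ge_minus_self[of b]
      by linarith
    then have "p a * \<bar>x a\<bar> \<le> p a * (exp (x a) + \<bar>b\<bar>)"
      using p_nonneg by (rule mult_left_mono)
    then show ?thesis
      using p_nonneg[of a] by (simp add: abs_mult distrib_left)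
  qed
  have "(\<lambda>a. p a * exp (x a) + p a * \<bar>b\<bar>) summable_on A"
    by (intro summable_on_add summable_on_cmult_left assms)
  then have "(\<lambda>a. norm (p a * x a)) summable_on A"
    by (rule summable_on_comparison_test) (use bound in auto)
  then show ?thesis
    using summable_on_iff_abs_summable_on_real by blast
qed

lemma infsum_mult_le_ln_infsum_exp:
  fixes p x :: "'a \<Rightarrow> real"
  assumes p_nonneg: "\<And>a. p a \<ge> 0" and p_summable: "p summable_on A" and p_sum: "infsum p A = 1"
    and exp_summable: "(\<lambda>a. p a * exp (x a)) summable_on A"
    and x_summable: "(\<lambda>a. p a * x a) summable_on A"
  shows "(\<Sum>\<^sub>\<infinity>a\<in>A. p a * x a) \<le> ln (\<Sum>\<^sub>\<infinity>a\<in>A. p a * exp (x a))"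
proof -
  define E where "E = (\<Sum>\<^sub>\<infinity>a\<in>A. p a * exp (x a))"
  obtain a0 where "a0 \<in> A" "p a0 > 0"
    using p_sum p_nonneg infsum_0[of A p] by (metis less_eq_real_def zero_neq_one)
  then have "0 < p a0 * exp (x a0)"
    by simp
  also have "\<dots> \<le> E"
    using finite_sum_le_infsum[OF exp_summable, of "{a0}"] \<open>a0 \<in> A\<close> p_nonneg
    by (simp add: E_def)
  finally have "E > 0" .
  have "p a * x a \<le> inverse E * (p a * exp (x a)) + (ln E - 1) * p a" for a
  proof -
    have "x a \<le> exp (x a - ln E) + ln E - 1"
      using exp_ge_add_one_self[of "x a - ln E"] by linarith
    also have "\<dots> = inverse E * exp (x a) + (ln E - 1)"
      using \<open>E > 0\<close> by (simp add: exp_diff field_simps)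
    finally have "p a * x a \<le> p a * (inverse E * exp (x a) + (ln E - 1))"
      using p_nonneg by (rule mult_left_mono)
    then show ?thesis
      by (simp add: algebra_simps)
  qed
  then have "(\<Sum>\<^sub>\<infinity>a\<in>A. p a * x a) \<le> (\<Sum>\<^sub>\<infinity>a\<in>A. inverse E * (p a * exp (x a)) + (ln E - 1) * p a)"
    by (intro infsum_mono summable_on_add summable_on_cmult_right exp_summable p_summable x_summable)
  also have "\<dots> = ln E"
    using \<open>E > 0\<close>
    by (subst infsum_add) (auto intro: summable_on_cmult_right exp_summable p_summable
        simp: infsum_cmult_right' p_sum simp flip: E_def)
  finally show ?thesis by (simp add: E_def)
qed

lemma measurable_pair_measure_countable2:
  assumes "countable A"
    and "\<And>y. y \<in> A \<Longrightarrow> (\<lambda>x. f x y) \<in> measurable N K"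
  shows "case_prod f \<in> measurable (N \<Otimes>\<^sub>M count_space A) K"
proof -
  have "(\<lambda>p. (\<lambda>y p. f (fst p) y) (snd p) p) \<in> measurable (N \<Otimes>\<^sub>M count_space A) K"
    by (rule measurable_compose_countable'[where I=A])
       (auto intro: measurable_compose[OF measurable_fst assms(2)] assms(1))
  then show ?thesis
    by (simp add: case_prod_beta')
qed

lemma infsum_real_eq_integral_count_space:
  fixes f :: "'a \<Rightarrow> real"
  shows "infsum f A = integral\<^sup>L (count_space A) f"
proof (cases "integrable (count_space A) f")
  case True
  then show ?thesis
    by (simp add: abs_summable_on_def infsetsum_def flip: infsetsum_infsum)
next
  case False
  then have "\<not> f summable_on A"
    using abs_summable_equivalent summable_on_iff_abs_summable_on_real abs_summable_on_def by blast
  with False show ?thesis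
    by (simp add: infsum_not_exists not_integrable_integral_eq)
qed

lemma borel_measurable_infsum [measurable (raw)]:
  fixes F :: "'w::countable \<Rightarrow> 'a \<Rightarrow> real"
  assumes "\<And>w. F w \<in> borel_measurable N"
  shows "(\<lambda>x. \<Sum>\<^sub>\<infinity>w. F w x) \<in> borel_measurable N"
proof -
  interpret sigma_finite_measure "count_space (UNIV :: 'w set)"
    by (rule sigma_finite_measure_count_space_countable) simp
  have "(\<lambda>(x, w). F w x) \<in> borel_measurable (N \<Otimes>\<^sub>M count_space UNIV)"
    by (rule measurable_pair_measure_countable2) (simp_all add: assms)
  then show ?thesis
    unfolding infsum_real_eq_integral_count_space by measurable
qed

lemma
  fixes f :: "'a \<Rightarrow> real"
  assumes "\<And>x. x \<in> A \<Longrightarrow> f x \<ge> 0" and "nn_integral (count_space A) f \<noteq> \<infinity>"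
  shows summable_on_of_nn_integral_count_space: "f summable_on A"
    and infsum_eq_enn2real_nn_integral_count_space:
      "infsum f A = enn2real (nn_integral (count_space A) f)"
proof -
  have "integrable (count_space A) f"
    using assms
    by (intro integrableI_nonneg) (auto simp: AE_count_space top.not_eq_extremum)
  then show "f summable_on A"
    using abs_summable_equivalent abs_summable_summable abs_summable_on_def by blast
  show "infsum f A = enn2real (nn_integral (count_space A) f)"
    using assms \<open>integrable (count_space A) f\<close>
    by (simp add: abs_summable_on_def infsetsum_conv_nn_integral flip: infsetsum_infsum)
qed

lemma
  fixes G T h :: "'a \<Rightarrow> real"
  assumes "prob_space S" and "c > 0"
    and T_integrable: "integrable S T" and T_integral: "(\<integral>s. T s \<partial>S) \<le> c"
    and h_integrable: "integrable S h" and G_measurable: "G \<in> borel_measurable S"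
    and bounds: "AE s in S. b \<le> G s \<and> T s > 0 \<and> G s \<le> ln (T s) + h s"
  shows integrable_of_AE_le_ln: "integrable S G"
    and integral_le_ln_of_AE_le_ln: "(\<integral>s. G s \<partial>S) \<le> ln c + (\<integral>s. h s \<partial>S)"
proof -
  interpret prob_space S by fact
  define R where "R s = T s / c + (h s + (ln c - 1))" for s
  have R_integrable: "integrable S R"
    unfolding R_def
    by (rule Bochner_Integration.integrable_add[OF integrable_divide[OF T_integrable]
        Bochner_Integration.integrable_add[OF h_integrable integrable_const]])
  have between: "AE s in S. b \<le> G s \<and> G s \<le> R s"
    using bounds
  proof eventually_elim
    case (elim s)
    then show ?case
      using ln_le_minus_one[of "T s / c"] \<open>c > 0\<close> by (simp add: R_def ln_div)
  qed
  show G_integrable: "integrable S G"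
  proof (rule Bochner_Integration.integrable_bound)
    show "integrable S (\<lambda>s. \<bar>b\<bar> + \<bar>R s\<bar>)"
      by (rule Bochner_Integration.integrable_add[OF integrable_const integrable_abs[OF R_integrable]])
    show "AE s in S. norm (G s) \<le> norm (\<bar>b\<bar> + \<bar>R s\<bar>)"
      using between by eventually_elim auto
  qed (rule G_measurable)
  have "(\<integral>s. G s \<partial>S) \<le> (\<integral>s. R s \<partial>S)"
    using between by (intro integral_mono_AE G_integrable R_integrable) (auto elim!: eventually_mono)
  also have "\<dots> = (\<integral>s. T s \<partial>S) / c + ((\<integral>s. h s \<partial>S) + (ln c - 1))"
    unfolding R_def using T_integrable h_integrable by (simp add: prob_space)
  also have "\<dots> \<le> ln c + (\<integral>s. h s \<partial>S)"
    using T_integral \<open>c > 0\<close> by (simp add: divide_le_eq_1)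
  finally show "(\<integral>s. G s \<partial>S) \<le> ln c + (\<integral>s. h s \<partial>S)" .
qed

lemma nn_integral_exp_sample_mean_deviation_le:
  assumes subg: "subgaussian M X \<sigma>2" and "n > 0"
  shows "(\<integral>\<^sup>+ s. ennreal (exp (\<gamma> * ((\<integral>z. X z \<partial>M) - (\<Sum>i<n. X (s i)) / real n))) \<partial>PiM {..<n} (\<lambda>_. M))
         \<le> ennreal (exp (\<gamma>\<^sup>2 * \<sigma>2 / (2 * real n)))"
proof -
  define \<mu> where "\<mu> = (\<integral>z. X z \<partial>M)"
  define l where "l = - \<gamma> / real n"
  have M: "prob_space M" and [measurable]: "X \<in> borel_measurable M"
    and mgf_integrable: "\<And>l. integrable M (\<lambda>z. exp (l * (X z - \<mu>)))"
    and mgf_le: "\<And>l. (\<integral>z. exp (l * (X z - \<mu>)) \<partial>M) \<le> exp (l\<^sup>2 * \<sigma>2 / 2)"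
    using subg unfolding subgaussian_def \<mu>_def by auto
  interpret product_sigma_finite "\<lambda>_. M"
    unfolding product_sigma_finite_def using prob_space_imp_sigma_finite[OF M] by simp
  have "(\<Sum>i<n. l * (X (s i) - \<mu>)) = l * ((\<Sum>i<n. X (s i)) - real n * \<mu>)" for s
    by (simp add: sum_subtractf flip: sum_distrib_left)
  then have "\<gamma> * (\<mu> - (\<Sum>i<n. X (s i)) / real n) = (\<Sum>i<n. l * (X (s i) - \<mu>))" for s
    using \<open>n > 0\<close> by (simp add: l_def field_simps)
  then have "(\<integral>\<^sup>+ s. ennreal (exp (\<gamma> * (\<mu> - (\<Sum>i<n. X (s i)) / real n))) \<partial>PiM {..<n} (\<lambda>_. M))
      = (\<integral>\<^sup>+ s. (\<Prod>i\<in>{..<n}. ennreal (exp (l * (X (s i) - \<mu>)))) \<partial>PiM {..<n} (\<lambda>_. M))"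
    by (simp add: exp_sum prod_ennreal)
  also have "\<dots> = (\<Prod>i\<in>{..<n}. \<integral>\<^sup>+ z. ennreal (exp (l * (X z - \<mu>))) \<partial>M)"
    by (rule product_nn_integral_prod) auto
  also have "\<dots> = (\<Prod>i\<in>{..<n}. ennreal (\<integral>z. exp (l * (X z - \<mu>)) \<partial>M))"
    by (intro prod.cong refl nn_integral_eq_integral mgf_integrable) auto
  also have "\<dots> = ennreal (\<Prod>i\<in>{..<n}. \<integral>z. exp (l * (X z - \<mu>)) \<partial>M)"
    by (rule prod_ennreal) auto
  also have "\<dots> \<le> ennreal (\<Prod>i\<in>{..<n}. exp (l\<^sup>2 * \<sigma>2 / 2))"
    by (intro ennreal_leI prod_mono conjI mgf_le integral_nonneg) auto
  also have "(\<Prod>i\<in>{..<n}. exp (l\<^sup>2 * \<sigma>2 / 2)) = exp (\<gamma>\<^sup>2 * \<sigma>2 / (2 * real n))"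
    using \<open>n > 0\<close> by (simp add: l_def power2_eq_square field_simps flip: exp_of_nat_mult)
  finally show ?thesis
    unfolding \<mu>_def .
qed

lemma borel_measurable_emp_mean [measurable]:
  assumes [measurable]: "f w \<in> borel_measurable M"
  shows "(\<lambda>s. emp_mean n f s w) \<in> borel_measurable (PiM {..<n} (\<lambda>_. M))"
  unfolding emp_mean_def by measurable

lemma
  assumes "prob_space M" and "integrable M (f w)" and "n > 0"
  shows integrable_emp_mean: "integrable (PiM {..<n} (\<lambda>_. M)) (\<lambda>s. emp_mean n f s w)"
    and integral_emp_mean: "(\<integral>s. emp_mean n f s w \<partial>PiM {..<n} (\<lambda>_. M)) = (\<integral>z. f w z \<partial>M)"
proof -
  have coordinate: "integrable (PiM {..<n} (\<lambda>_. M)) (\<lambda>s. f w (s i))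
      \<and> (\<integral>s. f w (s i) \<partial>PiM {..<n} (\<lambda>_. M)) = (\<integral>z. f w z \<partial>M)" if "i < n" for i
  proof -
    have proj: "(\<lambda>s. s i) \<in> measurable (PiM {..<n} (\<lambda>_. M)) M"
      using that by (intro measurable_component_singleton) auto
    have "distr (PiM {..<n} (\<lambda>_. M)) M (\<lambda>s. s i) = M"
      using assms(1) that by (intro distr_PiM_component) auto
    then show ?thesis
      using integrable_distr_eq[OF proj] integral_distr[OF proj] assms(2)
      by (metis borel_measurable_integrable)
  qed
  then show "integrable (PiM {..<n} (\<lambda>_. M)) (\<lambda>s. emp_mean n f s w)"
    unfolding emp_mean_def by (auto intro!: integrable_divide integrable_sum)
  show "(\<integral>s. emp_mean n f s w \<partial>PiM {..<n} (\<lambda>_. M)) = (\<integral>z. f w z \<partial>M)"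
    unfolding emp_mean_def using coordinate \<open>n > 0\<close> by (simp add: integral_sum)
qed

(* With m w = mu(f_w), these weights sum to the T_s of the proof idea above. *)
definition gap_tilted_weight ::
    "real \<Rightarrow> 'w pmf \<Rightarrow> ('w \<Rightarrow> real) \<Rightarrow> nat \<Rightarrow> ('w \<Rightarrow> 'z \<Rightarrow> real) \<Rightarrow> (nat \<Rightarrow> 'z) \<Rightarrow> 'w \<Rightarrow> real" where
  "gap_tilted_weight \<gamma> Q m n f s w = pmf Q w * exp (\<gamma> * (m w - emp_mean n f s w))"

lemma gap_tilted_weight_nonneg: "gap_tilted_weight \<gamma> Q m n f s w \<ge> 0"
  by (simp add: gap_tilted_weight_def)

lemma infsum_gap_tilted_weight_pos:
  assumes "gap_tilted_weight \<gamma> Q m n f s summable_on UNIV" and "pmf Q w0 > 0"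
  shows "(\<Sum>\<^sub>\<infinity>w. gap_tilted_weight \<gamma> Q m n f s w) > 0"
proof -
  have "0 < gap_tilted_weight \<gamma> Q m n f s w0"
    using assms(2) by (simp add: gap_tilted_weight_def)
  also have "\<dots> \<le> (\<Sum>\<^sub>\<infinity>w. gap_tilted_weight \<gamma> Q m n f s w)"
    using finite_sum_le_infsum[OF assms(1), of "{w0}"] by (simp add: gap_tilted_weight_nonneg)
  finally show ?thesis .
qed

lemma gibbs_weight_nonneg: "gibbs_weight \<gamma> Q n f s w \<ge> 0"
  by (simp add: gibbs_weight_def)

lemma gibbs_weight_pos: "pmf Q w > 0 \<Longrightarrow> gibbs_weight \<gamma> Q n f s w > 0"
  by (simp add: gibbs_weight_def)

lemma gibbs_weight_le_infsum:
  assumes "gibbs_weight \<gamma> Q n f s summable_on UNIV"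
  shows "gibbs_weight \<gamma> Q n f s w \<le> (\<Sum>\<^sub>\<infinity>v. gibbs_weight \<gamma> Q n f s v)"
  using finite_sum_le_infsum[OF assms, of "{w}"] by (simp add: gibbs_weight_nonneg)

lemma
  assumes "gibbs_weight \<gamma> Q n f s summable_on UNIV" and "pmf Q w0 > 0"
  shows infsum_gibbs_weight_pos: "(\<Sum>\<^sub>\<infinity>w. gibbs_weight \<gamma> Q n f s w) > 0"
    and summable_on_gibbs: "gibbs \<gamma> Q n f s summable_on UNIV"
    and infsum_gibbs: "(\<Sum>\<^sub>\<infinity>w. gibbs \<gamma> Q n f s w) = 1"
proof -
  have "0 < gibbs_weight \<gamma> Q n f s w0"
    using assms(2) by (rule gibbs_weight_pos)
  also have "\<dots> \<le> (\<Sum>\<^sub>\<infinity>w. gibbs_weight \<gamma> Q n f s w)"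
    using assms(1) by (rule gibbs_weight_le_infsum)
  finally show "(\<Sum>\<^sub>\<infinity>w. gibbs_weight \<gamma> Q n f s w) > 0" .
  then show "gibbs \<gamma> Q n f s summable_on UNIV" and "(\<Sum>\<^sub>\<infinity>w. gibbs \<gamma> Q n f s w) = 1"
    using summable_on_cmult_left[OF assms(1)]
    by (simp_all add: gibbs_def[abs_def] divide_inverse infsum_cmult_left')
qed

lemma gibbs_nonneg: "gibbs \<gamma> Q n f s w \<ge> 0"
  by (simp add: gibbs_def gibbs_weight_nonneg infsum_nonneg)

lemma gibbs_mult_exp_eq:
  "gibbs \<gamma> Q n f s w * exp (\<gamma> * m w)
     = gap_tilted_weight \<gamma> Q m n f s w * inverse (\<Sum>\<^sub>\<infinity>v. gibbs_weight \<gamma> Q n f s v)"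
  by (simp add: gibbs_def gibbs_weight_def gap_tilted_weight_def exp_diff exp_minus right_diff_distrib
      field_simps)

lemma
  fixes m :: "'w \<Rightarrow> real"
  assumes "\<gamma> > 0" and prior_pos: "pmf Q w0 > 0"
    and weight_summable: "gibbs_weight \<gamma> Q n f s summable_on UNIV"
    and tilted_summable: "gap_tilted_weight \<gamma> Q m n f s summable_on UNIV"
    and minimal: "\<And>w. m w0 \<le> m w"
  shows gibbs_expectation_ge_min: "m w0 \<le> (\<Sum>\<^sub>\<infinity>w. gibbs \<gamma> Q n f s w * m w)"
    and gibbs_expectation_le_ln_tilted:
      "\<gamma> * (\<Sum>\<^sub>\<infinity>w. gibbs \<gamma> Q n f s w * m w)
         \<le> ln (\<Sum>\<^sub>\<infinity>w. gap_tilted_weight \<gamma> Q m n f s w) + \<gamma> * emp_mean n f s w0 - ln (pmf Q w0)"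
proof -
  define p where "p = gibbs \<gamma> Q n f s"
  define Z where "Z = (\<Sum>\<^sub>\<infinity>w. gibbs_weight \<gamma> Q n f s w)"
  define T where "T = (\<Sum>\<^sub>\<infinity>w. gap_tilted_weight \<gamma> Q m n f s w)"
  note gibbs = gibbs_nonneg summable_on_gibbs[OF weight_summable prior_pos]
    infsum_gibbs[OF weight_summable prior_pos]
  have "Z > 0" and "T > 0"
    unfolding Z_def T_def using weight_summable tilted_summable prior_pos
    by (auto intro: infsum_gibbs_weight_pos infsum_gap_tilted_weight_pos)
  have exp_summable: "(\<lambda>w. p w * exp (\<gamma> * m w)) summable_on UNIV"
    unfolding p_def gibbs_mult_exp_eq by (rule summable_on_cmult_left[OF tilted_summable])
  have "\<gamma> * m w0 \<le> \<gamma> * m w" for w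
    using minimal \<open>\<gamma> > 0\<close> by simp
  then have scaled_summable: "(\<lambda>w. p w * (\<gamma> * m w)) summable_on UNIV"
    using gibbs(1,2) exp_summable unfolding p_def by (rule summable_on_mult_of_exp_summable[rotated 3])
  then have m_summable: "(\<lambda>w. p w * m w) summable_on UNIV"
    using summable_on_cmult_right'[of \<gamma> "\<lambda>w. p w * m w" UNIV] \<open>\<gamma> > 0\<close> by (simp add: ac_simps)
  have "m w0 = (\<Sum>\<^sub>\<infinity>w. p w * m w0)"
    using gibbs(3) by (simp add: infsum_cmult_left' p_def)
  also have "\<dots> \<le> (\<Sum>\<^sub>\<infinity>w. p w * m w)"
    using gibbs(1) minimal unfolding p_def
    by (intro infsum_mono summable_on_cmult_left gibbs(2) m_summable[unfolded p_def] mult_left_mono)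
  finally show "m w0 \<le> (\<Sum>\<^sub>\<infinity>w. gibbs \<gamma> Q n f s w * m w)"
    by (simp add: p_def)
  have "\<gamma> * (\<Sum>\<^sub>\<infinity>w. p w * m w) = (\<Sum>\<^sub>\<infinity>w. p w * (\<gamma> * m w))"
    by (simp add: ac_simps flip: infsum_cmult_right')
  also have "\<dots> \<le> ln (\<Sum>\<^sub>\<infinity>w. p w * exp (\<gamma> * m w))"
    using gibbs exp_summable scaled_summable unfolding p_def by (rule infsum_mult_le_ln_infsum_exp)
  also have "\<dots> = ln T - ln Z"
    using \<open>T > 0\<close> \<open>Z > 0\<close>
    by (simp add: p_def gibbs_mult_exp_eq infsum_cmult_left' ln_mult ln_inverse T_def flip: Z_def)
  also have "\<dots> \<le> ln T - ln (gibbs_weight \<gamma> Q n f s w0)"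
    using \<open>Z > 0\<close> gibbs_weight_pos[OF prior_pos, of \<gamma> n f s]
      gibbs_weight_le_infsum[OF weight_summable, of w0]
    by (simp add: Z_def)
  also have "\<dots> = ln T + \<gamma> * emp_mean n f s w0 - ln (pmf Q w0)"
    using prior_pos by (simp add: gibbs_weight_def ln_mult)
  finally show "\<gamma> * (\<Sum>\<^sub>\<infinity>w. gibbs \<gamma> Q n f s w * m w)
      \<le> ln (\<Sum>\<^sub>\<infinity>w. gap_tilted_weight \<gamma> Q m n f s w) + \<gamma> * emp_mean n f s w0 - ln (pmf Q w0)"
    by (simp add: p_def T_def)
qed

lemma nn_integral_gap_tilted_weight_le:
  fixes f :: "'w::countable \<Rightarrow> 'z \<Rightarrow> real"
  assumes subg: "\<And>w. subgaussian M (f w) \<sigma>2" and "n > 0"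
  defines "m \<equiv> \<lambda>w. \<integral>z. f w z \<partial>M"
  shows "(\<integral>\<^sup>+ s. (\<integral>\<^sup>+ w. gap_tilted_weight \<gamma> Q m n f s w \<partial>count_space UNIV) \<partial>PiM {..<n} (\<lambda>_. M))
         \<le> ennreal (exp (\<gamma>\<^sup>2 * \<sigma>2 / (2 * real n)))"
proof -
  let ?S = "PiM {..<n} (\<lambda>_. M)"
  let ?c = "exp (\<gamma>\<^sup>2 * \<sigma>2 / (2 * real n))"
  have [measurable]: "f w \<in> borel_measurable M" for w
    using subg by (simp add: subgaussian_def)
  have "prob_space ?S"
    using subg by (intro prob_space_PiM) (auto simp: subgaussian_def)
  then interpret pair_sigma_finite ?S "count_space (UNIV :: 'w set)"
    by (simp add: pair_sigma_finite_def prob_space_imp_sigma_finite sigma_finite_measure_count_space_countable)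
  have "(\<lambda>(s, w). ennreal (gap_tilted_weight \<gamma> Q m n f s w)) \<in> borel_measurable (?S \<Otimes>\<^sub>M count_space UNIV)"
    by (rule measurable_pair_measure_countable2) (simp_all add: gap_tilted_weight_def)
  then have "(\<integral>\<^sup>+ s. (\<integral>\<^sup>+ w. gap_tilted_weight \<gamma> Q m n f s w \<partial>count_space UNIV) \<partial>?S)
     = (\<integral>\<^sup>+ w. (\<integral>\<^sup>+ s. gap_tilted_weight \<gamma> Q m n f s w \<partial>?S) \<partial>count_space UNIV)"
    by (rule Fubini'[symmetric])
  also have "\<dots> \<le> (\<integral>\<^sup>+ w. ennreal (pmf Q w) * ennreal ?c \<partial>count_space UNIV)"
  proof (rule nn_integral_mono)
    fix w
    have "(\<integral>\<^sup>+ s. gap_tilted_weight \<gamma> Q m n f s w \<partial>?S)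
        = ennreal (pmf Q w) * (\<integral>\<^sup>+ s. ennreal (exp (\<gamma> * (m w - emp_mean n f s w))) \<partial>?S)"
      unfolding gap_tilted_weight_def
      by (subst nn_integral_cmult[symmetric]) (auto simp: ennreal_mult)
    also have "\<dots> \<le> ennreal (pmf Q w) * ennreal ?c"
      using nn_integral_exp_sample_mean_deviation_le[OF subg \<open>n > 0\<close>]
      by (intro mult_left_mono) (auto simp: m_def emp_mean_def)
    finally show "(\<integral>\<^sup>+ s. gap_tilted_weight \<gamma> Q m n f s w \<partial>?S) \<le> ennreal (pmf Q w) * ennreal ?c" .
  qed
  also have "\<dots> = ennreal ?c"
    by (simp add: nn_integral_multc nn_integral_pmf measure_pmf.emeasure_space_1[simplified])
  finally show ?thesis .
qed

lemma
  fixes f :: "'w::countable \<Rightarrow> 'z \<Rightarrow> real"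
  assumes subg: "\<And>w. subgaussian M (f w) \<sigma>2" and "n > 0"
  defines "m \<equiv> \<lambda>w. \<integral>z. f w z \<partial>M"
  shows AE_gap_tilted_weight_summable:
      "AE s in PiM {..<n} (\<lambda>_. M). gap_tilted_weight \<gamma> Q m n f s summable_on UNIV"
    and integrable_infsum_gap_tilted_weight:
      "integrable (PiM {..<n} (\<lambda>_. M)) (\<lambda>s. \<Sum>\<^sub>\<infinity>w. gap_tilted_weight \<gamma> Q m n f s w)"
    and integral_infsum_gap_tilted_weight_le:
      "(\<integral>s. (\<Sum>\<^sub>\<infinity>w. gap_tilted_weight \<gamma> Q m n f s w) \<partial>PiM {..<n} (\<lambda>_. M))
         \<le> exp (\<gamma>\<^sup>2 * \<sigma>2 / (2 * real n))"
proof -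
  let ?S = "PiM {..<n} (\<lambda>_. M)"
  let ?c = "exp (\<gamma>\<^sup>2 * \<sigma>2 / (2 * real n))"
  define Z where "Z s = (\<integral>\<^sup>+ w. gap_tilted_weight \<gamma> Q m n f s w \<partial>count_space UNIV)" for s
  interpret sigma_finite_measure "count_space (UNIV :: 'w set)"
    by (rule sigma_finite_measure_count_space_countable) simp
  have [measurable]: "f w \<in> borel_measurable M" for w
    using subg by (simp add: subgaussian_def)
  have tilted_measurable: "(\<lambda>s. gap_tilted_weight \<gamma> Q m n f s w) \<in> borel_measurable ?S" for w
    by (simp add: gap_tilted_weight_def)
  have "Z \<in> borel_measurable ?S"
    unfolding Z_def using tilted_measurable
    by (intro borel_measurable_nn_integral measurable_pair_measure_countable2) auto
  moreover have Z_le: "(\<integral>\<^sup>+ s. Z s \<partial>?S) \<le> ?c"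
    unfolding Z_def m_def using subg \<open>n > 0\<close> by (rule nn_integral_gap_tilted_weight_le)
  ultimately have "AE s in ?S. Z s \<noteq> \<infinity>"
    by (intro nn_integral_PInf_AE) (auto simp: top_unique)
  then have summable_and_eq: "AE s in ?S. gap_tilted_weight \<gamma> Q m n f s summable_on UNIV
      \<and> ennreal (\<Sum>\<^sub>\<infinity>w. gap_tilted_weight \<gamma> Q m n f s w) = Z s"
    by eventually_elim
       (simp add: Z_def gap_tilted_weight_nonneg summable_on_of_nn_integral_count_space
         infsum_eq_enn2real_nn_integral_count_space ennreal_enn2real_if)
  then show "AE s in ?S. gap_tilted_weight \<gamma> Q m n f s summable_on UNIV"
    by auto
  from summable_and_eq have infsum_eq:
    "AE s in ?S. ennreal (\<Sum>\<^sub>\<infinity>w. gap_tilted_weight \<gamma> Q m n f s w) = Z s"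
    by auto
  have nn_le: "(\<integral>\<^sup>+ s. ennreal (\<Sum>\<^sub>\<infinity>w. gap_tilted_weight \<gamma> Q m n f s w) \<partial>?S) \<le> ?c"
    using nn_integral_cong_AE[OF infsum_eq] Z_le by simp
  show integrable: "integrable ?S (\<lambda>s. \<Sum>\<^sub>\<infinity>w. gap_tilted_weight \<gamma> Q m n f s w)"
    using nn_le tilted_measurable
    by (intro integrableI_nonneg borel_measurable_infsum)
       (auto simp: infsum_nonneg gap_tilted_weight_nonneg top_unique less_top[symmetric])
  have "ennreal (\<integral>s. (\<Sum>\<^sub>\<infinity>w. gap_tilted_weight \<gamma> Q m n f s w) \<partial>?S) \<le> ?c"
    using nn_le
    by (subst nn_integral_eq_integral[symmetric])
       (auto simp: integrable infsum_nonneg gap_tilted_weight_nonneg)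
  then show "(\<integral>s. (\<Sum>\<^sub>\<infinity>w. gap_tilted_weight \<gamma> Q m n f s w) \<partial>?S) \<le> ?c"
    by (rule ennreal_le_iff[THEN iffD1, rotated]) simp
qed

theorem proposition5:
  fixes M :: "'z measure" and f :: "'w::countable \<Rightarrow> 'z \<Rightarrow> real" and Q :: "'w pmf"
    and \<gamma> \<sigma>2 :: real and n :: nat and w_hat :: 'w
  assumes "prob_space M"
    and meas: "\<And>w. f w \<in> borel_measurable M"
    and subg: "\<And>w. subgaussian M (f w) \<sigma>2"
    and "\<gamma> > 0" and "n > 0"
    and minim: "\<And>w. (\<integral>z. f w_hat z \<partial>M) \<le> (\<integral>z. f w z \<partial>M)"
    and "pmf Q w_hat > 0"
    and normalisable: "AE s in PiM {..<n} (\<lambda>_. M). gibbs_weight \<gamma> Q n f s summable_on UNIV"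
  shows "integrable (PiM {..<n} (\<lambda>_. M)) (\<lambda>s. \<Sum>\<^sub>\<infinity>w. gibbs \<gamma> Q n f s w * (\<integral>z. f w z \<partial>M))
    \<and> (\<integral>s. (\<Sum>\<^sub>\<infinity>w. gibbs \<gamma> Q n f s w * (\<integral>z. f w z \<partial>M)) \<partial>PiM {..<n} (\<lambda>_. M))
       \<le> (INF w. \<integral>z. f w z \<partial>M) + (1 / \<gamma>) * ln (1 / pmf Q w_hat) + \<gamma> * \<sigma>2 / (2 * real n)"
proof -
  let ?S = "PiM {..<n} (\<lambda>_. M)"
  define m where "m = (\<lambda>w. \<integral>z. f w z \<partial>M)"
  define T where "T = (\<lambda>s. \<Sum>\<^sub>\<infinity>w. gap_tilted_weight \<gamma> Q m n f s w)"
  define G where "G = (\<lambda>s. \<Sum>\<^sub>\<infinity>w. gibbs \<gamma> Q n f s w * m w)"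
  define h where "h = (\<lambda>s. \<gamma> * emp_mean n f s w_hat - ln (pmf Q w_hat))"
  interpret S: prob_space ?S
    using \<open>prob_space M\<close> by (intro prob_space_PiM) auto
  have m_minimal: "m w_hat \<le> m w" for w
    using minim by (simp add: m_def)
  note tilted = AE_gap_tilted_weight_summable integrable_infsum_gap_tilted_weight
    integral_infsum_gap_tilted_weight_le
  note tilted = tilted[where M=M and f=f and \<gamma>=\<gamma> and Q=Q, OF subg \<open>n > 0\<close>, folded m_def, folded T_def]
  have bounds: "AE s in ?S. \<gamma> * m w_hat \<le> \<gamma> * G s \<and> T s > 0 \<and> \<gamma> * G s \<le> ln (T s) + h s"
    using normalisable tilted(1)
  proof eventually_elim
    case (elim s)
    then show ?case
      using gibbs_expectation_ge_min[OF \<open>\<gamma> > 0\<close> \<open>pmf Q w_hat > 0\<close> elim m_minimal]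
        gibbs_expectation_le_ln_tilted[OF \<open>\<gamma> > 0\<close> \<open>pmf Q w_hat > 0\<close> elim m_minimal]
        infsum_gap_tilted_weight_pos[OF elim(2) \<open>pmf Q w_hat > 0\<close>] \<open>\<gamma> > 0\<close>
      by (simp add: G_def T_def h_def)
  qed
  have "integrable M (f w_hat)"
    using subg by (simp add: subgaussian_def)
  then have h_integrable: "integrable ?S h"
    and h_integral: "(\<integral>s. h s \<partial>?S) = \<gamma> * m w_hat - ln (pmf Q w_hat)"
    using integrable_emp_mean[where f=f, OF \<open>prob_space M\<close> _ \<open>n > 0\<close>]
      integral_emp_mean[where f=f, OF \<open>prob_space M\<close> _ \<open>n > 0\<close>]
    by (simp_all add: h_def m_def S.prob_space)
  have G_measurable: "(\<lambda>s. \<gamma> * G s) \<in> borel_measurable ?S"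
    unfolding G_def gibbs_def gibbs_weight_def m_def using meas by measurable
  note scaled = integrable_of_AE_le_ln integral_le_ln_of_AE_le_ln
  note scaled = scaled[OF S.prob_space_axioms exp_gt_zero tilted(2,3) h_integrable G_measurable bounds]
  moreover have "(INF w. \<integral>z. f w z \<partial>M) = m w_hat"
    unfolding m_def using minim by (intro cInf_eq_minimum) auto
  ultimately show ?thesis
    using h_integral \<open>\<gamma> > 0\<close> \<open>pmf Q w_hat > 0\<close>
    by (simp add: G_def m_def ln_div power2_eq_square field_simps)
qed

end
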